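(* Let the premiums $\{X_n, n\geq 1\}$ and the claims $\{Y_n, n\geq 1\}$ be sequences of nonnegative, identically distributed, independent random variables with finite expectations, and let the rates of interest $\{I_n, n\geq 1\}$ be a sequence of i.i.d. nonnegative random variables with finite expectations. Suppose that the sequences $\{X_n\}$, $\{Y_n\}$, $\{I_n\}$ are mutually independent. For $u\geq 0$ define $U_0=u$, $U_n=U_{n-1}(1+I_n)+X_n-Y_n$ for $n\geq 1$, and $\Psi(u)=\mathbb{P}\big(\bigcup_{n=1}^\infty\{U_n<0\}\big)$. If there exists a positive real number $R$ satisfying $$\mathbb{E}\Big(e^{R\left(Y_1-X_1\right)}\Big)\leq 1,$$ then $\Psi(u)\leq e^{-Ru}$ for all $u>0$. *)

theory Defs
  imports "HOL-Probability.Probability"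
begin

fun surplus :: "real \<Rightarrow> (nat \<Rightarrow> 'a \<Rightarrow> real) \<Rightarrow> (nat \<Rightarrow> 'a \<Rightarrow> real) \<Rightarrow> (nat \<Rightarrow> 'a \<Rightarrow> real)
                 \<Rightarrow> nat \<Rightarrow> 'a \<Rightarrow> real" where
  "surplus u X Y I 0 \<omega> = u"
| "surplus u X Y I (Suc n) \<omega> =
     surplus u X Y I n \<omega> * (1 + I (Suc n) \<omega>) + X (Suc n) \<omega> - Y (Suc n) \<omega>"

definition ruin_prob :: "'a measure \<Rightarrow> real \<Rightarrow> (nat \<Rightarrow> 'a \<Rightarrow> real) \<Rightarrow> (nat \<Rightarrow> 'a \<Rightarrow> real)
                 \<Rightarrow> (nat \<Rightarrow> 'a \<Rightarrow> real) \<Rightarrow> real" where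
  "ruin_prob M u X Y I = measure M (\<Union>n\<in>{1..}. {\<omega> \<in> space M. surplus u X Y I n \<omega> < 0})"

end

(* Since the rates of interest are nonnegative, the surplus dominates the interest-free
   surplus u - S n, where S n = (Y 1 - X 1) + ... + (Y n - X n), as long as the latter has
   stayed nonnegative; so ruin forces the random walk S to exceed u.  Independence of the
   premium and claim sequences makes the increments Y n - X n independent and distributed
   like Y 1 - X 1, hence E exp (R (Y n - X n)) <= 1 for all n.  Then exp (R S n), stopped
   when S first exceeds u, is a nonnegative supermartingale started at 1 that is at least
   exp (R u) once S has exceeded u, so P (S ever exceeds u) <= exp (- R u). *)

theory Submission
  imports Defs
begin

lemma (in prob_space) indep_vars_imp_indep_var:
  assumes "indep_vars M' X I" "i \<in> I" "j \<in> I" "i \<noteq> j"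
  shows "indep_var (M' i) (X i) (M' j) (X j)"
proof -
  have "indep_var (PiM {i} M') (\<lambda>\<omega>. restrict (\<lambda>k. X k \<omega>) {i}) (PiM {j} M') (\<lambda>\<omega>. restrict (\<lambda>k. X k \<omega>) {j})"
    using assms by (intro indep_var_restrict) auto
  then have "indep_var (M' i) ((\<lambda>f. f i) \<circ> (\<lambda>\<omega>. restrict (\<lambda>k. X k \<omega>) {i}))
                       (M' j) ((\<lambda>f. f j) \<circ> (\<lambda>\<omega>. restrict (\<lambda>k. X k \<omega>) {j}))"
    by (rule indep_var_compose) (auto intro: measurable_component_singleton)
  then show ?thesis
    by (simp add: comp_def)
qed

lemma (in prob_space) indep_var_components:
  assumes "indep_var (PiM I M') (\<lambda>\<omega>. restrict (\<lambda>i. X i \<omega>) I) (PiM I N') (\<lambda>\<omega>. restrict (\<lambda>i. Y i \<omega>) I)"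
    and "i \<in> I"
  shows "indep_var (M' i) (X i) (N' i) (Y i)"
proof -
  have "indep_var (M' i) ((\<lambda>f. f i) \<circ> (\<lambda>\<omega>. restrict (\<lambda>i. X i \<omega>) I))
                  (N' i) ((\<lambda>f. f i) \<circ> (\<lambda>\<omega>. restrict (\<lambda>i. Y i \<omega>) I))"
    by (rule indep_var_compose[OF assms(1)]; rule measurable_component_singleton[OF assms(2)])
  then show ?thesis
    using assms(2) by (simp add: comp_def)
qed

lemma (in prob_space) indep_var_nn_integral:
  fixes f g :: "'s \<Rightarrow> ennreal"
  assumes "indep_var S X T Y" "f \<in> borel_measurable S" "g \<in> borel_measurable T"
  shows "(\<integral>\<^sup>+\<omega>. f (X \<omega>) * g (Y \<omega>) \<partial>M) = (\<integral>\<^sup>+\<omega>. f (X \<omega>) \<partial>M) * (\<integral>\<^sup>+\<omega>. g (Y \<omega>) \<partial>M)"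
proof -
  have borel: "(\<lambda>_::bool. borel) = case_bool borel borel"
    by (simp add: fun_eq_iff split: bool.split)
  have "indep_vars (\<lambda>_. borel) (case_bool (f \<circ> X) (g \<circ> Y)) UNIV"
    unfolding borel using indep_var_compose[OF assms] by (simp add: indep_var_def)
  then have "(\<integral>\<^sup>+\<omega>. (\<Prod>b\<in>UNIV. case_bool (f \<circ> X) (g \<circ> Y) b \<omega>) \<partial>M)
      = (\<Prod>b\<in>UNIV. \<integral>\<^sup>+\<omega>. case_bool (f \<circ> X) (g \<circ> Y) b \<omega> \<partial>M)"
    by (intro indep_vars_nn_integral) auto
  then show ?thesis
    by (simp add: UNIV_bool mult.commute comp_def)
qed

lemma (in prob_space) nn_integral_indep_pair_eq:
  fixes f :: "'s \<times> 's \<Rightarrow> ennreal"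
  assumes "indep_var S X T Y" "indep_var S X' T Y'"
    and "distr M S X = distr M S X'" "distr M T Y = distr M T Y'"
    and f: "f \<in> borel_measurable (S \<Otimes>\<^sub>M T)"
  shows "(\<integral>\<^sup>+\<omega>. f (X \<omega>, Y \<omega>) \<partial>M) = (\<integral>\<^sup>+\<omega>. f (X' \<omega>, Y' \<omega>) \<partial>M)"
proof -
  have rv: "(\<lambda>\<omega>. (X \<omega>, Y \<omega>)) \<in> M \<rightarrow>\<^sub>M S \<Otimes>\<^sub>M T" "(\<lambda>\<omega>. (X' \<omega>, Y' \<omega>)) \<in> M \<rightarrow>\<^sub>M S \<Otimes>\<^sub>M T"
    using assms(1,2) by (auto simp: indep_var_distribution_eq)
  have "(\<integral>\<^sup>+\<omega>. f (X \<omega>, Y \<omega>) \<partial>M) = (\<integral>\<^sup>+z. f z \<partial>distr M (S \<Otimes>\<^sub>M T) (\<lambda>\<omega>. (X \<omega>, Y \<omega>)))"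
    using rv f by (simp add: nn_integral_distr)
  also have "\<dots> = (\<integral>\<^sup>+z. f z \<partial>distr M (S \<Otimes>\<^sub>M T) (\<lambda>\<omega>. (X' \<omega>, Y' \<omega>)))"
    using assms(1-4) by (simp add: indep_var_distribution_eq)
  also have "\<dots> = (\<integral>\<^sup>+\<omega>. f (X' \<omega>, Y' \<omega>) \<partial>M)"
    using rv f by (simp add: nn_integral_distr)
  finally show ?thesis .
qed

lemma vimage_restrict_prod_emb:
  assumes "\<And>i. i \<in> I \<Longrightarrow> X i \<in> space M \<rightarrow> space (M' i)" "J \<subseteq> I"
  shows "(\<lambda>\<omega>. restrict (\<lambda>i. X i \<omega>) I) -` prod_emb I M' J (PiE J B) \<inter> space M
    = space M \<inter> (\<Inter>j\<in>J. X j -` B j)"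
  using assms by (auto simp: prod_emb_def PiE_iff Pi_iff) (metis subsetD)

lemma (in prob_space) prob_vimage_prod_emb:
  assumes X: "indep_vars M' X I" and J: "finite J" "J \<subseteq> I"
    and B: "\<And>j. j \<in> J \<Longrightarrow> B j \<in> sets (M' j)"
  shows "prob ((\<lambda>\<omega>. restrict (\<lambda>i. X i \<omega>) I) -` prod_emb I M' J (PiE J B) \<inter> space M)
    = (\<Prod>j\<in>J. prob (X j -` B j \<inter> space M))"
proof -
  have eq: "(\<lambda>\<omega>. restrict (\<lambda>i. X i \<omega>) I) -` prod_emb I M' J (PiE J B) \<inter> space M
      = space M \<inter> (\<Inter>j\<in>J. X j -` B j)"
    using X J(2) by (intro vimage_restrict_prod_emb) (auto simp: indep_vars_def measurable_def)
  show ?thesis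
  proof (cases "J = {}")
    case True
    then show ?thesis unfolding eq by (simp add: prob_space)
  next
    case False
    then have "space M \<inter> (\<Inter>j\<in>J. X j -` B j) = (\<Inter>j\<in>J. X j -` B j \<inter> space M)"
      by auto
    then show ?thesis
      using indep_varsD[OF X False J B] by (simp add: eq)
  qed
qed

lemma (in prob_space) prob_INT_case_sum:
  fixes X Y :: "'i \<Rightarrow> 'a \<Rightarrow> 'b"
  assumes X: "indep_vars (\<lambda>_. N) X I" and Y: "indep_vars (\<lambda>_. N) Y I"
    and XY: "indep_var (PiM I (\<lambda>_. N)) (\<lambda>\<omega>. restrict (\<lambda>i. X i \<omega>) I)
                       (PiM I (\<lambda>_. N)) (\<lambda>\<omega>. restrict (\<lambda>i. Y i \<omega>) I)"
    and J: "J \<noteq> {}" "finite J" "J \<subseteq> I <+> I" and B: "\<And>p. p \<in> J \<Longrightarrow> B p \<in> sets N"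
  shows "prob (\<Inter>p\<in>J. case_sum X Y p -` B p \<inter> space M) = (\<Prod>p\<in>J. prob (case_sum X Y p -` B p \<inter> space M))"
proof -
  define J0 J1 where "J0 = Inl -` J" and "J1 = Inr -` J"
  have J_eq: "J = Inl ` J0 \<union> Inr ` J1"
  proof (intro set_eqI iffI)
    fix p assume "p \<in> J"
    then show "p \<in> Inl ` J0 \<union> Inr ` J1"
      by (cases p) (auto simp: J0_def J1_def)
  qed (auto simp: J0_def J1_def)
  have J01: "finite J0" "finite J1" "J0 \<subseteq> I" "J1 \<subseteq> I"
    using J(2,3) by (auto simp: J0_def J1_def intro: finite_vimageI)
  have B01: "\<And>i. i \<in> J0 \<Longrightarrow> B (Inl i) \<in> sets N" "\<And>i. i \<in> J1 \<Longrightarrow> B (Inr i) \<in> sets N"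
    using B by (auto simp: J0_def J1_def)
  define Xs Ys where "Xs = (\<lambda>\<omega>. restrict (\<lambda>i. X i \<omega>) I)" and "Ys = (\<lambda>\<omega>. restrict (\<lambda>i. Y i \<omega>) I)"
  define E0 E1 where "E0 = prod_emb I (\<lambda>_. N) J0 (PiE J0 (\<lambda>i. B (Inl i)))"
    and "E1 = prod_emb I (\<lambda>_. N) J1 (PiE J1 (\<lambda>i. B (Inr i)))"
  have E: "E0 \<in> sets (PiM I (\<lambda>_. N))" "E1 \<in> sets (PiM I (\<lambda>_. N))"
    using J01 B01 by (auto simp: E0_def E1_def intro!: sets_PiM_I)
  have XE0: "Xs -` E0 \<inter> space M = space M \<inter> (\<Inter>i\<in>J0. X i -` B (Inl i))"
    unfolding Xs_def E0_def using X J01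
    by (intro vimage_restrict_prod_emb) (auto simp: indep_vars_def measurable_def)
  have YE1: "Ys -` E1 \<inter> space M = space M \<inter> (\<Inter>i\<in>J1. Y i -` B (Inr i))"
    unfolding Ys_def E1_def using Y J01
    by (intro vimage_restrict_prod_emb) (auto simp: indep_vars_def measurable_def)
  have "(\<Inter>p\<in>J. case_sum X Y p -` B p \<inter> space M) = space M \<inter> (\<Inter>p\<in>J. case_sum X Y p -` B p)"
    using J(1) by auto
  also have "\<dots> = (Xs -` E0 \<inter> space M) \<inter> (Ys -` E1 \<inter> space M)"
    unfolding XE0 YE1 by (subst J_eq) (auto simp: ball_Un dest!: ball_imageD)
  also have "\<dots> = (\<lambda>\<omega>. (Xs \<omega>, Ys \<omega>)) -` (E0 \<times> E1) \<inter> space M"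
    by auto
  finally have "prob (\<Inter>p\<in>J. case_sum X Y p -` B p \<inter> space M)
      = prob (Xs -` E0 \<inter> space M) * prob (Ys -` E1 \<inter> space M)"
    using indep_varD[OF XY[folded Xs_def Ys_def] E] by simp
  also have "\<dots> = (\<Prod>i\<in>J0. prob (X i -` B (Inl i) \<inter> space M)) * (\<Prod>i\<in>J1. prob (Y i -` B (Inr i) \<inter> space M))"
    unfolding Xs_def Ys_def E0_def E1_def
    using prob_vimage_prod_emb[OF X J01(1,3) B01(1)] prob_vimage_prod_emb[OF Y J01(2,4) B01(2)] by simp
  also have "\<dots> = (\<Prod>p\<in>J. prob (case_sum X Y p -` B p \<inter> space M))"
    using J01 by (subst J_eq, subst prod.union_disjoint) (auto simp: prod.reindex inj_on_def)
  finally show ?thesis .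
qed

lemma (in prob_space) indep_vars_case_sum:
  fixes X Y :: "'i \<Rightarrow> 'a \<Rightarrow> 'b"
  assumes X: "indep_vars (\<lambda>_. N) X I" and Y: "indep_vars (\<lambda>_. N) Y I"
    and XY: "indep_var (PiM I (\<lambda>_. N)) (\<lambda>\<omega>. restrict (\<lambda>i. X i \<omega>) I)
                       (PiM I (\<lambda>_. N)) (\<lambda>\<omega>. restrict (\<lambda>i. Y i \<omega>) I)"
  shows "indep_vars (\<lambda>_. N) (case_sum X Y) (I <+> I)"
  unfolding indep_vars_def2
proof (intro conjI ballI indep_setsI)
  show rv: "case_sum X Y p \<in> M \<rightarrow>\<^sub>M N" if "p \<in> I <+> I" for p
    using that X Y by (auto simp: indep_vars_def)
  show "{case_sum X Y p -` C \<inter> space M | C. C \<in> sets N} \<subseteq> events" if "p \<in> I <+> I" for p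
    using rv[OF that] by (auto intro: measurable_sets)
next
  fix A J assume J: "J \<noteq> {}" "J \<subseteq> I <+> I" "finite J"
    and "\<forall>p\<in>J. A p \<in> {case_sum X Y p -` C \<inter> space M | C. C \<in> sets N}"
  then have "\<forall>p\<in>J. \<exists>C. C \<in> sets N \<and> A p = case_sum X Y p -` C \<inter> space M"
    by blast
  then obtain B where "\<And>p. p \<in> J \<Longrightarrow> B p \<in> sets N" "\<And>p. p \<in> J \<Longrightarrow> A p = case_sum X Y p -` B p \<inter> space M"
    by metis
  with prob_INT_case_sum[OF X Y XY J(1,3,2)]
  show "prob (\<Inter>p\<in>J. A p) = (\<Prod>p\<in>J. prob (A p))"
    by simp
qed

lemma (in prob_space) indep_vars_compose_pairs:
  fixes X Y :: "'i \<Rightarrow> 'a \<Rightarrow> 'b"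
  assumes X: "indep_vars (\<lambda>_. N) X I" and Y: "indep_vars (\<lambda>_. N) Y I"
    and XY: "indep_var (PiM I (\<lambda>_. N)) (\<lambda>\<omega>. restrict (\<lambda>i. X i \<omega>) I)
                       (PiM I (\<lambda>_. N)) (\<lambda>\<omega>. restrict (\<lambda>i. Y i \<omega>) I)"
    and f: "f \<in> N \<Otimes>\<^sub>M N \<rightarrow>\<^sub>M K"
  shows "indep_vars (\<lambda>_. K) (\<lambda>i \<omega>. f (X i \<omega>, Y i \<omega>)) I"
proof -
  have "indep_vars (\<lambda>i. PiM {Inl i, Inr i} (\<lambda>_. N)) (\<lambda>i \<omega>. restrict (\<lambda>p. case_sum X Y p \<omega>) {Inl i, Inr i}) I"
    using indep_vars_case_sum[OF X Y XY]
    by (rule indep_vars_restrict) (auto simp: disjoint_family_on_def)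
  then have "indep_vars (\<lambda>_. K)
      (\<lambda>i. (\<lambda>r. f (r (Inl i), r (Inr i))) \<circ> (\<lambda>\<omega>. restrict (\<lambda>p. case_sum X Y p \<omega>) {Inl i, Inr i})) I"
    by (rule indep_vars_compose)
       (auto intro!: measurable_compose[OF measurable_Pair f] measurable_component_singleton)
  then show ?thesis
    by (simp add: comp_def)
qed

lemma borel_measurable_PiM_component [measurable]:
  "(\<lambda>f. f i) \<in> borel_measurable (PiM I (\<lambda>_. borel))"
proof (cases "i \<in> I")
  case True
  then show ?thesis by (rule measurable_component_singleton)
next
  case False
  show ?thesis
    by (rule measurable_cong[where g="\<lambda>_. undefined", THEN iffD2])
       (use False in \<open>auto simp: space_PiM PiE_def extensional_def\<close>)
qed

lemma (in prob_space) nn_integral_indep_restrict_mult: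
  fixes Z :: "'i \<Rightarrow> 'a \<Rightarrow> real" and h :: "real \<Rightarrow> ennreal"
  assumes Z: "indep_vars (\<lambda>_. borel) Z I" and "K \<subseteq> I" "i \<in> I" "i \<notin> K"
    and g: "g \<in> borel_measurable (PiM K (\<lambda>_. borel))" and h: "h \<in> borel_measurable borel"
  shows "(\<integral>\<^sup>+\<omega>. g (restrict (\<lambda>j. Z j \<omega>) K) * h (Z i \<omega>) \<partial>M)
    = (\<integral>\<^sup>+\<omega>. g (restrict (\<lambda>j. Z j \<omega>) K) \<partial>M) * (\<integral>\<^sup>+\<omega>. h (Z i \<omega>) \<partial>M)"
proof -
  have indep: "indep_var (PiM K (\<lambda>_. borel)) (\<lambda>\<omega>. restrict (\<lambda>j. Z j \<omega>) K)
                         (PiM {i} (\<lambda>_. borel)) (\<lambda>\<omega>. restrict (\<lambda>j. Z j \<omega>) {i})"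
    using Z by (rule indep_var_restrict) (use assms(2-4) in auto)
  have "(\<lambda>r. h (r i)) \<in> borel_measurable (PiM {i} (\<lambda>_. borel))"
    using h by measurable
  from indep_var_nn_integral[OF indep g this] show ?thesis
    by simp
qed

(* exp (R S n) for the walk S stopped when it first exceeds u, with the overshoot cut back
   to u; the induction on n is the supermartingale property. *)
lemma (in prob_space) nn_integral_stopped_exp_random_walk_le_1:
  fixes Z :: "nat \<Rightarrow> 'a \<Rightarrow> real"
  assumes Z: "indep_vars (\<lambda>_. borel) Z {1..}" and R: "0 \<le> R"
    and mgf: "\<And>n. 1 \<le> n \<Longrightarrow> (\<integral>\<^sup>+\<omega>. exp (R * Z n \<omega>) \<partial>M) \<le> 1"
  shows "(\<integral>\<^sup>+\<omega>. (if \<exists>m\<le>n. u < (\<Sum>j=1..m. Z j \<omega>) then exp (R * u)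
                 else exp (R * (\<Sum>j=1..n. Z j \<omega>))) \<partial>M) \<le> 1"
proof -
  define S where "S m \<omega> = (\<Sum>j=1..m. Z j \<omega>)" for m \<omega>
  define H where "H n \<omega> \<longleftrightarrow> (\<exists>m\<le>n. u < S m \<omega>)" for n \<omega>
  define F :: "nat \<Rightarrow> 'a \<Rightarrow> ennreal" where "F n \<omega> = (if H n \<omega> then exp (R * u) else 0)" for n \<omega>
  define G :: "nat \<Rightarrow> 'a \<Rightarrow> ennreal" where "G n \<omega> = (if H n \<omega> then 0 else exp (R * S n \<omega>))" for n \<omega>
  have rv: "Z j \<in> borel_measurable M" if "1 \<le> j" for j
    using Z that by (auto simp: indep_vars_def)
  have [measurable]: "Z (Suc n) \<in> borel_measurable M" for n
    by (rule rv) simp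
  have [measurable]: "S m \<in> borel_measurable M" for m
    unfolding S_def using rv by (intro borel_measurable_sum) auto
  have [measurable]: "Measurable.pred M (H n)" for n
    unfolding H_def by measurable
  have F_G_step: "F (Suc n) \<omega> + G (Suc n) \<omega> \<le> F n \<omega> + G n \<omega> * exp (R * Z (Suc n) \<omega>)" for n \<omega>
  proof (cases "H n \<omega>")
    case True
    then have "H (Suc n) \<omega>"
      unfolding H_def by (meson le_SucI)
    with True show ?thesis
      by (simp add: F_def G_def)
  next
    case False
    have S_Suc: "S (Suc n) \<omega> = S n \<omega> + Z (Suc n) \<omega>"
      by (simp add: S_def)
    have H_Suc: "H (Suc n) \<omega> \<longleftrightarrow> u < S (Suc n) \<omega>"
      using False by (auto simp: H_def le_Suc_eq)
    have exp_le: "exp (R * u) \<le> exp (R * S (Suc n) \<omega>)" if "u < S (Suc n) \<omega>"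
      using that R by (simp add: mult_left_mono)
    have "G n \<omega> * exp (R * Z (Suc n) \<omega>) = exp (R * S (Suc n) \<omega>)"
      using False by (simp add: G_def S_Suc distrib_left exp_add ennreal_mult)
    then show ?thesis
      using False exp_le by (auto simp: F_def G_def H_Suc intro: ennreal_leI)
  qed
  have G_indep: "(\<integral>\<^sup>+\<omega>. G n \<omega> * exp (R * Z (Suc n) \<omega>) \<partial>M)
      = (\<integral>\<^sup>+\<omega>. G n \<omega> \<partial>M) * (\<integral>\<^sup>+\<omega>. exp (R * Z (Suc n) \<omega>) \<partial>M)" for n
  proof -
    define g :: "(nat \<Rightarrow> real) \<Rightarrow> ennreal"
      where "g r = (if \<exists>m\<le>n. u < (\<Sum>j=1..m. r j) then 0 else exp (R * (\<Sum>j=1..n. r j)))" for r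
    have G_eq: "G n \<omega> = g (restrict (\<lambda>j. Z j \<omega>) {1..n})" for \<omega>
      unfolding G_def g_def H_def S_def by (auto intro!: sum.cong)
    have "g \<in> borel_measurable (PiM {1..n} (\<lambda>_. borel))"
      unfolding g_def by measurable
    then show ?thesis
      using nn_integral_indep_restrict_mult[OF Z, of "{1..n}" "Suc n" g "\<lambda>x. exp (R * x)"]
      by (simp add: G_eq)
  qed
  have bound: "(\<integral>\<^sup>+\<omega>. F n \<omega> + G n \<omega> \<partial>M) \<le> 1" for n
  proof (induction n)
    case 0
    show ?case
      using R by (simp add: F_def G_def H_def S_def emeasure_space_1 mult_nonneg_nonpos)
  next
    case (Suc n)
    have "(\<integral>\<^sup>+\<omega>. F (Suc n) \<omega> + G (Suc n) \<omega> \<partial>M) \<le> (\<integral>\<^sup>+\<omega>. F n \<omega> + G n \<omega> * exp (R * Z (Suc n) \<omega>) \<partial>M)"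
      by (intro nn_integral_mono F_G_step)
    also have "\<dots> = (\<integral>\<^sup>+\<omega>. F n \<omega> \<partial>M) + (\<integral>\<^sup>+\<omega>. G n \<omega> \<partial>M) * (\<integral>\<^sup>+\<omega>. exp (R * Z (Suc n) \<omega>) \<partial>M)"
      unfolding F_def G_def by (subst nn_integral_add) (auto simp: G_indep[unfolded G_def])
    also have "\<dots> \<le> (\<integral>\<^sup>+\<omega>. F n \<omega> \<partial>M) + (\<integral>\<^sup>+\<omega>. G n \<omega> \<partial>M)"
      using mgf[of "Suc n"] by (auto intro: add_left_mono mult_left_le)
    also have "\<dots> = (\<integral>\<^sup>+\<omega>. F n \<omega> + G n \<omega> \<partial>M)"
      unfolding F_def G_def by (subst nn_integral_add) auto
    finally show ?case
      using Suc.IH by (rule order_trans)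
  qed
  have F_G_eq: "F n \<omega> + G n \<omega> = (if \<exists>m\<le>n. u < (\<Sum>j=1..m. Z j \<omega>) then exp (R * u) else exp (R * (\<Sum>j=1..n. Z j \<omega>)))" for \<omega>
    by (auto simp: F_def G_def H_def S_def)
  show ?thesis
    using bound[of n] by (simp only: F_G_eq)
qed

lemma (in prob_space) prob_random_walk_exceeds_le_exp:
  fixes Z :: "nat \<Rightarrow> 'a \<Rightarrow> real"
  assumes Z: "indep_vars (\<lambda>_. borel) Z {1..}" and R: "0 \<le> R"
    and mgf: "\<And>n. 1 \<le> n \<Longrightarrow> (\<integral>\<^sup>+\<omega>. exp (R * Z n \<omega>) \<partial>M) \<le> 1"
  shows "prob {\<omega> \<in> space M. \<exists>m. u < (\<Sum>j=1..m. Z j \<omega>)} \<le> exp (- R * u)"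
proof -
  define H where "H n = {\<omega> \<in> space M. \<exists>m\<le>n. u < (\<Sum>j=1..m. Z j \<omega>)}" for n
  have [measurable]: "(\<lambda>\<omega>. \<Sum>j=1..m. Z j \<omega>) \<in> borel_measurable M" for m
    using Z by (intro borel_measurable_sum) (auto simp: indep_vars_def)
  have H_sets: "H n \<in> events" for n
    unfolding H_def by measurable
  have "exp (R * u) * prob (H n) \<le> 1" for n
  proof -
    have "ennreal (exp (R * u) * prob (H n)) = (\<integral>\<^sup>+\<omega>. ennreal (exp (R * u)) * indicator (H n) \<omega> \<partial>M)"
      using H_sets by (simp add: nn_integral_cmult_indicator emeasure_eq_measure ennreal_mult)
    also have "\<dots> \<le> (\<integral>\<^sup>+\<omega>. (if \<exists>m\<le>n. u < (\<Sum>j=1..m. Z j \<omega>) then exp (R * u) else exp (R * (\<Sum>j=1..n. Z j \<omega>))) \<partial>M)"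
      by (intro nn_integral_mono) (auto simp: H_def indicator_def)
    also have "\<dots> \<le> 1"
      by (rule nn_integral_stopped_exp_random_walk_le_1[OF Z R mgf])
    finally show ?thesis
      by simp
  qed
  then have bound: "prob (H n) \<le> exp (- R * u)" for n
    by (simp add: exp_minus field_simps)
  have "incseq H"
    unfolding H_def by (intro incseq_SucI) (auto intro: le_SucI)
  then have "(\<lambda>n. prob (H n)) \<longlonglongrightarrow> prob (\<Union>n. H n)"
    using H_sets by (intro finite_Lim_measure_incseq) auto
  then have "prob (\<Union>n. H n) \<le> exp (- R * u)"
    using bound by (intro LIMSEQ_le_const2) auto
  moreover have "(\<Union>n. H n) = {\<omega> \<in> space M. \<exists>m. u < (\<Sum>j=1..m. Z j \<omega>)}"
    unfolding H_def by blast
  ultimately show ?thesis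
    by simp
qed

lemma surplus_ge_interest_free:
  assumes "\<forall>k\<in>{1..n}. 0 \<le> I k \<omega>" and "\<forall>m<n. (\<Sum>j=1..m. Y j \<omega> - X j \<omega>) \<le> u"
  shows "u - (\<Sum>j=1..n. Y j \<omega> - X j \<omega>) \<le> surplus u X Y I n \<omega>"
  using assms
proof (induction n)
  case 0
  then show ?case by simp
next
  case (Suc n)
  then have IH: "u - (\<Sum>j=1..n. Y j \<omega> - X j \<omega>) \<le> surplus u X Y I n \<omega>"
    by auto
  moreover have "(\<Sum>j=1..n. Y j \<omega> - X j \<omega>) \<le> u"
    using Suc.prems(2) by auto
  ultimately have "0 \<le> surplus u X Y I n \<omega>"
    by linarith
  moreover have "0 \<le> I (Suc n) \<omega>"
    using Suc.prems(1) by auto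
  ultimately have "surplus u X Y I n \<omega> \<le> surplus u X Y I n \<omega> * (1 + I (Suc n) \<omega>)"
    by (simp add: algebra_simps)
  with IH show ?case
    by simp
qed

lemma ruin_imp_interest_free_ruin:
  assumes "\<forall>k\<in>{1..n}. 0 \<le> I k \<omega>" and "surplus u X Y I n \<omega> < 0"
  shows "\<exists>m\<le>n. u < (\<Sum>j=1..m. Y j \<omega> - X j \<omega>)"
proof (rule ccontr)
  assume "\<not> ?thesis"
  then have "\<forall>m\<le>n. (\<Sum>j=1..m. Y j \<omega> - X j \<omega>) \<le> u"
    by auto
  moreover have "u - (\<Sum>j=1..n. Y j \<omega> - X j \<omega>) \<le> surplus u X Y I n \<omega>"
    using assms(1) calculation by (intro surplus_ge_interest_free) auto
  ultimately show False
    using assms(2) by fastforce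
qed

theorem mainTheorem7:
  fixes M :: "'a measure" and X Y I :: "nat \<Rightarrow> 'a \<Rightarrow> real" and R u :: real
  assumes "prob_space M"
    and rvX: "\<And>n. n \<ge> 1 \<Longrightarrow> X n \<in> borel_measurable M"
    and rvY: "\<And>n. n \<ge> 1 \<Longrightarrow> Y n \<in> borel_measurable M"
    and rvI: "\<And>n. n \<ge> 1 \<Longrightarrow> I n \<in> borel_measurable M"
    and nonnegX: "\<And>n. n \<ge> 1 \<Longrightarrow> AE \<omega> in M. X n \<omega> \<ge> 0"
    and nonnegY: "\<And>n. n \<ge> 1 \<Longrightarrow> AE \<omega> in M. Y n \<omega> \<ge> 0"
    and nonnegI: "\<And>n. n \<ge> 1 \<Longrightarrow> AE \<omega> in M. I n \<omega> \<ge> 0"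
    and intX: "\<And>n. n \<ge> 1 \<Longrightarrow> integrable M (X n)"
    and intY: "\<And>n. n \<ge> 1 \<Longrightarrow> integrable M (Y n)"
    and intI: "\<And>n. n \<ge> 1 \<Longrightarrow> integrable M (I n)"
    and idX: "\<And>n. n \<ge> 1 \<Longrightarrow> distr M borel (X n) = distr M borel (X 1)"
    and idY: "\<And>n. n \<ge> 1 \<Longrightarrow> distr M borel (Y n) = distr M borel (Y 1)"
    and idI: "\<And>n. n \<ge> 1 \<Longrightarrow> distr M borel (I n) = distr M borel (I 1)"
    and indX: "prob_space.indep_vars M (\<lambda>_. borel) X {1..}"
    and indY: "prob_space.indep_vars M (\<lambda>_. borel) Y {1..}"
    and indI: "prob_space.indep_vars M (\<lambda>_. borel) I {1..}"
    and mutual: "prob_space.indep_vars M (\<lambda>_. PiM {1..} (\<lambda>_. borel))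
        (\<lambda>k \<omega>. case k of 0 \<Rightarrow> (\<lambda>n\<in>{1..}. X n \<omega>)
                       | Suc 0 \<Rightarrow> (\<lambda>n\<in>{1..}. Y n \<omega>)
                       | Suc (Suc _) \<Rightarrow> (\<lambda>n\<in>{1..}. I n \<omega>))
        {0, 1, 2::nat}"
    and R_pos: "R > 0"
    and lundberg: "(\<integral>\<^sup>+ \<omega>. ennreal (exp (R * (Y 1 \<omega> - X 1 \<omega>))) \<partial>M) \<le> 1"
    and u_pos: "u > 0"
  shows "ruin_prob M u X Y I \<le> exp (- R * u)"
proof -
  interpret prob_space M by fact
  have XY: "indep_var (PiM {1..} (\<lambda>_. borel)) (\<lambda>\<omega>. restrict (\<lambda>n. X n \<omega>) {1..})
                      (PiM {1..} (\<lambda>_. borel)) (\<lambda>\<omega>. restrict (\<lambda>n. Y n \<omega>) {1..})"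
    using indep_vars_imp_indep_var[OF mutual, of 0 1] by simp
  define Z where "Z n \<omega> = Y n \<omega> - X n \<omega>" for n \<omega>
  have Z: "indep_vars (\<lambda>_. borel) Z {1..}"
    using indep_vars_compose_pairs[OF indX indY XY, of "\<lambda>(x, y). y - x" borel]
    by (simp add: Z_def [abs_def])
  have mgf: "(\<integral>\<^sup>+\<omega>. exp (R * Z n \<omega>) \<partial>M) \<le> 1" if "1 \<le> n" for n
    using nn_integral_indep_pair_eq[OF indep_var_components[OF XY] indep_var_components[OF XY]
        idX[OF that] idY[OF that], of "\<lambda>(x, y). exp (R * (y - x))"] that lundberg
    by (simp add: Z_def)
  have [measurable]: "(\<lambda>\<omega>. \<Sum>j=1..m. Z j \<omega>) \<in> borel_measurable M" for m
    using Z by (intro borel_measurable_sum) (auto simp: indep_vars_def)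
  have "AE \<omega> in M. \<forall>k\<in>{1..}. 0 \<le> I k \<omega>"
    using nonnegI by (subst AE_ball_countable) auto
  then have "AE \<omega> in M. \<omega> \<in> (\<Union>n\<in>{1..}. {\<omega> \<in> space M. surplus u X Y I n \<omega> < 0})
      \<longrightarrow> \<omega> \<in> {\<omega> \<in> space M. \<exists>m. u < (\<Sum>j=1..m. Z j \<omega>)}"
    by eventually_elim (auto simp: Z_def dest!: ruin_imp_interest_free_ruin[rotated])
  then have "ruin_prob M u X Y I \<le> prob {\<omega> \<in> space M. \<exists>m. u < (\<Sum>j=1..m. Z j \<omega>)}"
    unfolding ruin_prob_def by (rule finite_measure_mono_AE) measurable
  also have "\<dots> \<le> exp (- R * u)"
    using Z R_pos mgf by (intro prob_random_walk_exceeds_le_exp) auto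
  finally show ?thesis .
qed

end
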